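(* Let $x\in[n]$ be $a$-below, $c=T[x]$ and $i=\mathrm{bwt}(x)$. For every $c$-run break $j<i-a$ and every $j'\in\{j-1,j\}$ with $\mathrm{BWT}_r[j']=c$, $$\big|\mathrm{lcs}\big(T[\mathrm{text}(j')-\mathrm{LCP}_r[j],\mathrm{text}(j')],\,T[1,x]\big)\big|\le\big|\mathrm{lcs}\big(T[1,x],\,T[\mathrm{text}(i-a)-\mathrm{LCP}_r[i-a],\mathrm{text}(i-a)]\big)\big|.$$
   Context: Let $T=T[1,n]\in\Sigma^n$, $n\ge2$, over $\Sigma=\{1,\dots,\sigma\}$, with $T[1]=\$$ the smallest character, occurring only at position 1, and every character of $\Sigma$ occurring in $T$. $T[i,j]=T[i]\cdots T[j]$ (empty if $i>j$). Let $\overleftarrow T=T[n]\cdots T[1]$; $\mathrm{SA}_r$ is the suffix array of $\overleftarrow T$; $\mathrm{LCP}_r[1]=0$ and for $i\ge2$, $\mathrm{LCP}_r[i]$ is the length of the longest common prefix of the suffixes of $\overleftarrow T$ starting at $\mathrm{SA}_r[i-1]$ and $\mathrm{SA}_r[i]$; $\mathrm{BWT}_r[i]=\overleftarrow T[\mathrm{SA}_r[i]-1]$ if $\mathrm{SA}_r[i]>1$, else $\overleftarrow T[n]$. $\mathrm{text}(i)=n-\mathrm{SA}_r[i]+1$, $\mathrm{bwt}(x)=\mathrm{SA}_r^{-1}[n+1-x]$. $\mathrm{lcs}(\alpha,\beta)$ is the longest common suffix of strings $\alpha,\beta$ and $|\cdot|$ denotes length. For $i\in[2,n]$, $c\in\Sigma$,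 $i$ is a $c$-run break if $\mathrm{BWT}_r[i-1]\ne\mathrm{BWT}_r[i]$ and $c\in\{\mathrm{BWT}_r[i-1],\mathrm{BWT}_r[i]\}$. With $i=\mathrm{bwt}(x)$, $x$ is $a$-below if $a\in[0,i-2]$ and $\mathrm{BWT}_r[i-a-1]\ne\mathrm{BWT}_r[i-a]=\dots=\mathrm{BWT}_r[i]$. *)

theory Defs
  imports Main "HOL-Library.List_Lexorder"
begin

text \<open>Texts are lists of naturals, accessed 1-indexed: position k of T is T ! (k-1).\<close>

definition ch :: "nat list \<Rightarrow> nat \<Rightarrow> nat" where
  "ch T k = T ! (k - 1)"

definition substr :: "nat list \<Rightarrow> nat \<Rightarrow> nat \<Rightarrow> nat list" where
  "substr T i j = (if i > j then [] else take (j - i + 1) (drop (i - 1) T))"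

fun lcp :: "nat list \<Rightarrow> nat list \<Rightarrow> nat list" where
  "lcp (a # as) (b # bs) = (if a = b then a # lcp as bs else [])"
| "lcp _ _ = []"

definition lcs :: "nat list \<Rightarrow> nat list \<Rightarrow> nat list" where
  "lcs a b = rev (lcp (rev a) (rev b))"

definition rsuf :: "nat list \<Rightarrow> nat \<Rightarrow> nat list" where
  "rsuf T p = drop (p - 1) (rev T)"

text \<open>Suffix array of the reversed text, as a list: positions 1..n sorted by their suffixes
  (lexicographic order, a proper prefix being smaller).\<close>
definition SA_list :: "nat list \<Rightarrow> nat list" where
  "SA_list T = sort_key (rsuf T) [1..<length T + 1]"

definition SAr :: "nat list \<Rightarrow> nat \<Rightarrow> nat" where
  "SAr T i = SA_list T ! (i - 1)"

definition SAr_inv :: "nat list \<Rightarrow> nat \<Rightarrow> nat" where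
  "SAr_inv T p = (THE i. i \<in> {1..length T} \<and> SAr T i = p)"

definition LCPr :: "nat list \<Rightarrow> nat \<Rightarrow> nat" where
  "LCPr T i = (if i = 1 then 0
     else length (lcp (rsuf T (SAr T (i - 1))) (rsuf T (SAr T i))))"

definition BWTr :: "nat list \<Rightarrow> nat \<Rightarrow> nat" where
  "BWTr T i = (if SAr T i > 1 then ch (rev T) (SAr T i - 1) else ch (rev T) (length T))"

definition textpos :: "nat list \<Rightarrow> nat \<Rightarrow> nat" where
  "textpos T i = length T - SAr T i + 1"

definition bwtpos :: "nat list \<Rightarrow> nat \<Rightarrow> nat" where
  "bwtpos T x = SAr_inv T (length T + 1 - x)"

definition run_break :: "nat list \<Rightarrow> nat \<Rightarrow> nat \<Rightarrow> bool" where
  "run_break T c i \<longleftrightarrow> i \<in> {2..length T} \<and> BWTr T (i - 1) \<noteq> BWTr T i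
      \<and> c \<in> {BWTr T (i - 1), BWTr T i}"

definition a_below :: "nat list \<Rightarrow> nat \<Rightarrow> nat \<Rightarrow> bool" where
  "a_below T a x \<longleftrightarrow> (let i = bwtpos T x in
      a \<le> i - 2 \<and> 2 \<le> i \<and> BWTr T (i - a - 1) \<noteq> BWTr T (i - a)
      \<and> (\<forall>k \<in> {i - a..i}. BWTr T k = BWTr T i))"

end

theory Submission
  imports Defs
begin

text \<open>Read backwards, lcs(T[p-L,p], T[1,x]) is the lcp of the first L+1 symbols of a suffix of
  the reversed text with the suffix in row i = bwt(x) of the suffix array. With m = i-a, the rows
  j' \<le> m-1 < m \<le> i are sorted, and in a sorted list the lcp of two entries is at most the lcp of
  any two entries lying between them. So lcp(row j', row i) is bounded both by lcp(row m, row i)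
  and by LCP[m] = lcp(row m-1, row m), and their minimum (capped at LCP[m]+1) is the right-hand
  side. The sentinel only keeps LCP[k] below the text positions, so that the substrings are not
  truncated; the run-break and a-below hypotheses enter only through j' \<le> j < i-a.\<close>

lemma lcp_comm: "lcp xs ys = lcp ys xs"
  by (induction xs ys rule: lcp.induct) auto

lemma lcp_take: "lcp (take k xs) ys = take k (lcp xs ys)"
  by (induction xs ys arbitrary: k rule: lcp.induct) (auto simp: take_Cons split: nat.splits)

lemma lcp_nth: "k < length (lcp xs ys) \<Longrightarrow> xs ! k = ys ! k \<and> k < length xs \<and> k < length ys"
  by (induction xs ys arbitrary: k rule: lcp.induct) (auto simp: nth_Cons split: nat.splits if_splits)

lemma lcp_sorted_le:
  fixes xs ys zs :: "nat list"
  assumes "xs \<le> ys" "ys \<le> zs"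
  shows "length (lcp xs zs) \<le> min (length (lcp xs ys)) (length (lcp ys zs))"
  using assms
proof (induction xs arbitrary: ys zs)
  case (Cons a xs)
  then obtain b ys' c zs' where ys: "ys = b # ys'" and zs: "zs = c # zs'"
    by (cases ys; cases zs) auto
  show ?case
  proof (cases "a = c")
    case True
    with Cons.prems ys zs have "a = b" "xs \<le> ys'" "ys' \<le> zs'" by auto
    with Cons.IH[OF this(2,3)] True ys zs show ?thesis by auto
  qed (use ys zs in auto)
qed simp

lemma lcp_take_sorted_chain_le:
  fixes u v w y :: "nat list"
  assumes "u \<le> v" "v \<le> w" "w \<le> y"
  shows "length (lcp (take (Suc L) u) y) \<le> length (lcp (take (Suc (length (lcp v w))) w) y)"
proof -
  have "u \<le> w"
    using assms by order
  then have "length (lcp u y) \<le> min (length (lcp u w)) (length (lcp w y))"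
    using assms(3) by (rule lcp_sorted_le)
  moreover have "length (lcp u w) \<le> length (lcp v w)"
    using lcp_sorted_le[OF assms(1,2)] by simp
  ultimately have "length (lcp u y) \<le> length (lcp w y)" "length (lcp u y) \<le> length (lcp v w)"
    by simp_all
  then show ?thesis
    unfolding lcp_take by (simp add: min.coboundedI1 le_SucI)
qed

lemma SA_list_props:
  shows "length (SA_list T) = length T" "distinct (SA_list T)" "set (SA_list T) = {1..length T}"
    and "sorted (map (rsuf T) (SA_list T))"
proof -
  show "length (SA_list T) = length T"
    unfolding SA_list_def length_sort length_upt by simp
  show "distinct (SA_list T)" "set (SA_list T) = {1..length T}"
    unfolding SA_list_def by auto
  show "sorted (map (rsuf T) (SA_list T))"
    unfolding SA_list_def by (rule sorted_sort_key)
qed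

lemma SAr_in_range: "k \<in> {1..length T} \<Longrightarrow> SAr T k \<in> {1..length T}"
  unfolding SAr_def using SA_list_props(1,3)[of T] nth_mem[of "k - 1" "SA_list T"] by auto

lemma SAr_inj:
  assumes "k \<in> {1..length T}" "l \<in> {1..length T}" "SAr T k = SAr T l"
  shows "k = l"
proof -
  have "k - 1 < length (SA_list T)" "l - 1 < length (SA_list T)"
    using SA_list_props(1)[of T] assms by auto
  then have "k - 1 = l - 1"
    using assms(3) SA_list_props(2)[of T] nth_eq_iff_index_eq unfolding SAr_def by blast
  then show "k = l"
    using assms by auto
qed

lemma rsuf_SAr_mono:
  assumes "k \<le> l" "1 \<le> k" "l \<le> length T"
  shows "rsuf T (SAr T k) \<le> rsuf T (SAr T l)"
proof -
  have "map (rsuf T) (SA_list T) ! (k - 1) \<le> map (rsuf T) (SA_list T) ! (l - 1)"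
    using SA_list_props(1,4)[of T] assms by (intro sorted_nth_mono) auto
  then show ?thesis
    using SA_list_props(1)[of T] assms unfolding SAr_def by simp
qed

lemma bwtpos_props:
  assumes "x \<in> {1..length T}"
  shows "bwtpos T x \<in> {1..length T}" "SAr T (bwtpos T x) = length T + 1 - x"
proof -
  let ?p = "length T + 1 - x"
  have "?p \<in> set (SA_list T)"
    using SA_list_props(3)[of T] assms by auto
  then obtain k where k: "k < length T" "SA_list T ! k = ?p"
    using SA_list_props(1)[of T] by (metis in_set_conv_nth)
  then have row: "Suc k \<in> {1..length T} \<and> SAr T (Suc k) = ?p"
    unfolding SAr_def by auto
  then have "(THE i. i \<in> {1..length T} \<and> SAr T i = ?p) = Suc k"
    using SAr_inj[of _ T "Suc k"] by (intro the_equality) auto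
  then show "bwtpos T x \<in> {1..length T}" "SAr T (bwtpos T x) = ?p"
    using row unfolding bwtpos_def SAr_inv_def by auto
qed

lemma length_rsuf: "p \<in> {1..length T} \<Longrightarrow> length (rsuf T p) = length T - p + 1"
  unfolding rsuf_def by auto

text \<open>The last symbol of rsuf T p is the sentinel T[1]; were rsuf T p a prefix of rsuf T q for
  q \<noteq> p, the sentinel would reappear at position q + n - p \<noteq> n of the reversed text.\<close>

lemma lcp_rsuf_less_length:
  assumes "ch T 1 = 1" "\<forall>k \<in> {2..length T}. ch T k \<noteq> 1"
    and "p \<in> {1..length T}" "q \<in> {1..length T}" "p \<noteq> q"
  shows "length (lcp (rsuf T p) (rsuf T q)) < length (rsuf T p)"
proof (rule ccontr)
  let ?n = "length T"
  assume "\<not> ?thesis"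
  then have "?n - p < length (lcp (rsuf T p) (rsuf T q))"
    using assms length_rsuf[of p T] by auto
  from lcp_nth[OF this]
  have same: "rsuf T p ! (?n - p) = rsuf T q ! (?n - p)" and in_q: "?n - p < length (rsuf T q)"
    by auto
  define d where "d = q - 1 + (?n - p)"
  have d: "d < ?n" "d \<noteq> ?n - 1"
    using in_q assms length_rsuf[of q T] unfolding d_def by auto
  have "rsuf T p ! (?n - p) = rev T ! (?n - 1)"
    using assms unfolding rsuf_def by (subst nth_drop) auto
  also have "\<dots> = 1"
    using assms unfolding ch_def by (subst rev_nth) auto
  finally have "rev T ! d = 1"
    using same in_q unfolding rsuf_def d_def by (subst (asm) nth_drop) auto
  then have "ch T (?n - d) = 1"
    using d unfolding ch_def by (simp add: rev_nth Suc_diff_Suc)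
  moreover have "?n - d \<in> {2..?n}"
    using d by auto
  ultimately show False
    using assms(2) by blast
qed

lemma LCPr_less_textpos:
  assumes "ch T 1 = 1" "\<forall>k \<in> {2..length T}. ch T k \<noteq> 1" "k \<in> {2..length T}"
  shows "LCPr T k < textpos T k" "LCPr T k < textpos T (k - 1)"
proof -
  have rows: "k - 1 \<in> {1..length T}" "k \<in> {1..length T}"
    using assms(3) by auto
  then have pos: "SAr T (k - 1) \<in> {1..length T}" "SAr T k \<in> {1..length T}"
    by (blast intro: SAr_in_range)+
  have "SAr T (k - 1) \<noteq> SAr T k"
    using SAr_inj[OF rows] assms(3) by auto
  then show "LCPr T k < textpos T k" "LCPr T k < textpos T (k - 1)"
    using lcp_rsuf_less_length[OF assms(1,2) pos(2,1)] lcp_rsuf_less_length[OF assms(1,2) pos]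
      assms(3) pos length_rsuf
    unfolding LCPr_def textpos_def by (auto simp: lcp_comm)
qed

lemma rev_substr_textpos:
  assumes "k \<in> {1..length T}" "L < textpos T k"
  shows "rev (substr T (textpos T k - L) (textpos T k)) = take (Suc L) (rsuf T (SAr T k))"
proof -
  let ?n = "length T" and ?t = "textpos T k"
  have t: "?t \<le> ?n" "?n - ?t = SAr T k - 1"
    using SAr_in_range[OF assms(1)] unfolding textpos_def by auto
  have "substr T (?t - L) ?t = drop (?t - Suc L) (take ?t T)"
    unfolding substr_def using assms by (auto simp: Suc_diff_le take_drop)
  then have "rev (substr T (?t - L) ?t) = take (Suc L) (drop (?n - ?t) (rev T))"
    using t assms by (simp add: rev_drop rev_take min_def)
  then show ?thesis
    unfolding rsuf_def using t by simp
qed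

lemma substr_prefix_eq_rev_rsuf:
  assumes "x \<in> {1..length T}"
  shows "substr T 1 x = rev (rsuf T (SAr T (bwtpos T x)))"
  using assms bwtpos_props(2)[OF assms] unfolding substr_def rsuf_def by (simp add: rev_drop)

lemma lcs_LCPr_rows_le:
  assumes "ch T 1 = 1" "\<forall>k \<in> {2..length T}. ch T k \<noteq> 1"
    and "j' \<in> {j - 1, j}" "2 \<le> j" "j < m" "m \<le> i" "i \<le> length T"
  defines "y \<equiv> rev (rsuf T (SAr T i))"
  shows "length (lcs (substr T (textpos T j' - LCPr T j) (textpos T j')) y)
    \<le> length (lcs y (substr T (textpos T m - LCPr T m) (textpos T m)))"
proof -
  define s where "s k = rsuf T (SAr T k)" for k
  have sorted: "s j' \<le> s (m - 1)" "s (m - 1) \<le> s m" "s m \<le> s i"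
    unfolding s_def using assms(3-7) by (auto intro: rsuf_SAr_mono)
  have "LCPr T j < textpos T j'"
    using LCPr_less_textpos[OF assms(1,2), of j] assms(3-7) by auto
  then have substr_j': "rev (substr T (textpos T j' - LCPr T j) (textpos T j'))
      = take (Suc (LCPr T j)) (s j')"
    unfolding s_def using assms(3-7) by (intro rev_substr_textpos) auto
  have "LCPr T m < textpos T m"
    using LCPr_less_textpos[OF assms(1,2), of m] assms(3-7) by simp
  then have substr_m: "rev (substr T (textpos T m - LCPr T m) (textpos T m))
      = take (Suc (LCPr T m)) (s m)"
    unfolding s_def using assms(3-7) by (intro rev_substr_textpos) auto
  have "LCPr T m = length (lcp (s (m - 1)) (s m))"
    unfolding LCPr_def s_def using assms(3-7) by simp
  then show ?thesis
    using lcp_take_sorted_chain_le[OF sorted, of "LCPr T j"]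
    unfolding lcs_def length_rev substr_j' substr_m y_def rev_rev_ident s_def[symmetric]
      lcp_comm[of "s i"] by simp
qed

theorem mainTheorem5:
  fixes T :: "nat list" and \<sigma> :: nat and x a :: nat
  assumes "length T \<ge> 2"
    and "set T = {1..\<sigma>}"
    and "ch T 1 = 1"
    and "\<forall>k \<in> {2..length T}. ch T k \<noteq> 1"
    and "x \<in> {1..length T}"
    and "a_below T a x"
  shows "\<forall>j j'. run_break T (ch T x) j \<and> j < bwtpos T x - a
           \<and> j' \<in> {j - 1, j} \<and> BWTr T j' = ch T x \<longrightarrow>
         length (lcs (substr T (textpos T j' - LCPr T j) (textpos T j')) (substr T 1 x))
         \<le> length (lcs (substr T 1 x)
               (substr T (textpos T (bwtpos T x - a) - LCPr T (bwtpos T x - a))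
                         (textpos T (bwtpos T x - a))))"
proof (intro allI impI)
  fix j j'
  assume "run_break T (ch T x) j \<and> j < bwtpos T x - a \<and> j' \<in> {j - 1, j} \<and> BWTr T j' = ch T x"
  moreover have "bwtpos T x \<le> length T"
    using bwtpos_props(1)[OF assms(5)] by simp
  ultimately show "length (lcs (substr T (textpos T j' - LCPr T j) (textpos T j')) (substr T 1 x))
         \<le> length (lcs (substr T 1 x)
               (substr T (textpos T (bwtpos T x - a) - LCPr T (bwtpos T x - a))
                         (textpos T (bwtpos T x - a))))"
    unfolding substr_prefix_eq_rev_rsuf[OF assms(5)] run_break_def
    by (intro lcs_LCPr_rows_le[OF assms(3,4)]) auto
qed

end
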